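(* Let $p\ge 1$ be an integer. Then $\lambda_{\min}(\mathcal U'(p)^c)$ is the least real root of the polynomial $$g(\lambda;p)=(-4+2p)+(3-5p)\lambda+(6-p)\lambda^2+(1+4p)\lambda^3+(-2+p)\lambda^4-\lambda^5 .$$
   Context: All graphs are simple and finite. For a graph $G$, $\lambda_{\min}(G)$ denotes the least eigenvalue of the adjacency matrix $A(G)$, and $G^c$ denotes the complement of $G$. $K_{1,p}$ is the star with $p$ edges, whose degree-one vertices are called pendant vertices. For an integer $p\ge 1$, $\mathcal U'(p)$ is the graph of order $p+4$ obtained from disjoint copies of $K_{1,p}$ and the triangle $C_3$ by adding one edge joining a pendant vertex of $K_{1,p}$ to a vertex of $C_3$. *)

theory Defs
  imports "Jordan_Normal_Form.Char_Poly" "HOL-Computational_Algebra.Polynomial"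
begin

text \<open>A simple graph on vertex set {0..<n} is given by a symmetric irreflexive
  adjacency predicate E.\<close>

definition adjacency_matrix :: "nat \<Rightarrow> (nat \<Rightarrow> nat \<Rightarrow> bool) \<Rightarrow> real mat" where
  "adjacency_matrix n E = mat n n (\<lambda>(i, j). if E i j then 1 else 0)"

definition complement_graph :: "(nat \<Rightarrow> nat \<Rightarrow> bool) \<Rightarrow> nat \<Rightarrow> nat \<Rightarrow> bool" where
  "complement_graph E i j \<longleftrightarrow> i \<noteq> j \<and> \<not> E i j"

definition lambda_min :: "real mat \<Rightarrow> real" where
  "lambda_min A = Min {k. eigenvalue A k}"

text \<open>U'(p), order p+4: star K_{1,p} with centre 0 and pendant vertices 1..p;
  triangle on p+1, p+2, p+3; extra edge joining pendant vertex 1 to triangle vertex p+1.\<close>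

definition U'_edge :: "nat \<Rightarrow> nat \<Rightarrow> nat \<Rightarrow> bool" where
  "U'_edge p i j \<longleftrightarrow>
     (i = 0 \<and> 1 \<le> j \<and> j \<le> p) \<or>
     (p + 1 \<le> i \<and> i \<le> p + 3 \<and> p + 1 \<le> j \<and> j \<le> p + 3 \<and> i \<noteq> j) \<or>
     (i = 1 \<and> j = p + 1)"

definition U'_adj :: "nat \<Rightarrow> nat \<Rightarrow> nat \<Rightarrow> bool" where
  "U'_adj p i j \<longleftrightarrow> U'_edge p i j \<or> U'_edge p j i"

definition g_poly :: "nat \<Rightarrow> real poly" where
  "g_poly p = (let q = real p in
     [: -4 + 2*q, 3 - 5*q, 6 - q, 1 + 4*q, -2 + q, -1 :])"

end

theory Submission
  imports Defs
begin

text \<open>The vertex partition \<open>{0}, {1}, {2..p}, {p+1}, {p+2, p+3}\<close> is equitable for the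
  complement of \<open>U'(p)\<close>. An eigenvector for an eigenvalue other than \<open>-1\<close> and \<open>0\<close> is
  constant on the cells (the cell \<open>{2..p}\<close> is a clique with equal outside neighbourhoods, and
  \<open>p+2, p+3\<close> have equal neighbourhoods), so it comes from the \<open>5 \<times> 5\<close> quotient matrix, whose
  characteristic polynomial is \<open>-g\<close>; conversely every root of \<open>g\<close> lifts to an eigenvector.
  Since \<open>g(-p-2) > 0 > g(-2)\<close>, the least root of \<open>g\<close> lies below \<open>-2\<close>, hence below the
  remaining eigenvalues \<open>-1\<close> and \<open>0\<close>.\<close>

definition g_fun :: "real \<Rightarrow> real \<Rightarrow> real" where
  "g_fun P L = (-4 + 2*P) + (3 - 5*P)*L + (6 - P)*L^2 + (1 + 4*P)*L^3 + (-2 + P)*L^4 - L^5"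

lemma poly_g_poly: "poly (g_poly p) x = g_fun (real p) x"
  unfolding g_poly_def Let_def g_fun_def
  by (simp add: algebra_simps power2_eq_square power3_eq_cube eval_nat_numeral)

text \<open>The eigenvalue equations of the quotient matrix; the unknowns are the values on the cells
  \<open>{0}, {1}, {2..p}, {p+1}, {p+2, p+3}\<close>, and \<open>P\<close> stands for \<open>p\<close>.\<close>

definition quotient_eigen :: "real \<Rightarrow> real \<Rightarrow> real \<Rightarrow> real \<Rightarrow> real \<Rightarrow> real \<Rightarrow> real \<Rightarrow> bool" where
  "quotient_eigen P L x0 x1 x2 xa xb \<longleftrightarrow>
     xa + 2*xb = L*x0 \<and> (P - 1)*x2 + 2*xb = L*x1 \<and> x1 + (P - 2)*x2 + xa + 2*xb = L*x2 \<and>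
     x0 + (P - 1)*x2 = L*xa \<and> x0 + x1 + (P - 1)*x2 = L*xb"

lemma quotient_eigen_trivial_if_g_nonzero:
  assumes "quotient_eigen P L x0 x1 x2 xa xb" and "g_fun P L \<noteq> 0"
  shows "x0 = 0 \<and> x1 = 0 \<and> x2 = 0 \<and> xa = 0 \<and> xb = 0"
proof -
  have "g_fun P L * x0 = 0 \<and> g_fun P L * x1 = 0 \<and> g_fun P L * x2 = 0 \<and>
        g_fun P L * xa = 0 \<and> g_fun P L * xb = 0"
    using assms(1) unfolding quotient_eigen_def g_fun_def by (Groebner_Basis.algebra)
  with assms(2) show ?thesis by simp
qed

lemma quotient_eigen_nontrivial_solution:
  assumes g: "g_fun P L = 0" and L: "L < -2"
  shows "\<exists>x0 x1 x2 xa xb. quotient_eigen P L x0 x1 x2 xa xb \<and> (x1 \<noteq> 0 \<or> xa \<noteq> 0)"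
proof -
  \<comment> \<open>Back substitution in the quotient system; the one remaining equation is \<open>g = 0\<close>.\<close>
  define x2 where "x2 = L^3 + L^2 - 1"
  define x1 where "x1 = -((L - 1)*((P - 1) - (L + 1)^2))"
  define xa where "xa = (L + 1)*(x2 - x1)"
  define xb where "xb = (L*x1 - (P - 1)*x2)/2"
  define x0 where "x0 = L*xa - (P - 1)*x2"
  have "quotient_eigen P L x0 x1 x2 xa xb"
    using g unfolding quotient_eigen_def g_fun_def x0_def x1_def x2_def xa_def xb_def
    by (Groebner_Basis.algebra)
  \<comment> \<open>Nontriviality is witnessed off the cell \<open>{2..p}\<close>, which is empty for \<open>p = 1\<close>.\<close>
  moreover have "x1 \<noteq> 0 \<or> xa \<noteq> 0"
  proof -
    have "L^2 * (L + 1) < 0" using L by (simp add: mult_pos_neg)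
    then have "x2 < 0" unfolding x2_def by (simp add: algebra_simps power2_eq_square power3_eq_cube)
    then show ?thesis using L unfolding xa_def by auto
  qed
  ultimately show ?thesis by blast
qed

lemma g_fun_at_minus_2: "g_fun P (-2) = 6 - 8*P"
  unfolding g_fun_def by simp

lemma g_fun_at_minus_P_minus_2_pos:
  assumes "P \<ge> 1"
  shows "g_fun P (-(P + 2)) > 0"
proof -
  define q where "q = P - 1"
  have "g_fun P (-(P + 2)) = 76 + 175*q + 175*q^2 + 90*q^3 + 22*q^4 + 2*q^5"
    unfolding g_fun_def q_def by (Groebner_Basis.algebra)
  also have "\<dots> > 0" using assms by (simp add: q_def add_pos_nonneg)
  finally show ?thesis .
qed

lemma g_poly_nonzero: "g_poly p \<noteq> 0"
proof
  assume "g_poly p = 0"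
  then have "real (8 * p) = real 6" using poly_g_poly[of p "-2"] by (simp add: g_fun_at_minus_2)
  then have "8 * p = 6" by (simp only: of_nat_eq_iff)
  then show False by presburger
qed

lemma g_poly_root_below_minus_2:
  assumes "p \<ge> 1"
  obtains r where "r < -2" and "poly (g_poly p) r = 0"
proof -
  have "\<exists>x. -(real p + 2) < x \<and> x < -2 \<and> poly (g_poly p) x = 0"
    using assms g_fun_at_minus_P_minus_2_pos[of "real p"]
    by (intro poly_IVT_neg) (simp_all add: poly_g_poly g_fun_at_minus_2)
  with that show ?thesis by blast
qed

lemma dim_row_adjacency_matrix: "dim_row (adjacency_matrix n E) = n"
  by (simp add: adjacency_matrix_def)

lemma adjacency_matrix_mult_vec_nth:
  assumes "v \<in> carrier_vec n" and "i < n"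
  shows "(adjacency_matrix n E *\<^sub>v v) $ i = (\<Sum>j<n. if E i j then v $ j else 0)"
  using assms unfolding adjacency_matrix_def
  by (auto simp: scalar_prod_def atLeast0LessThan intro!: sum.cong)

lemma sum_U'_vertices:
  fixes h :: "nat \<Rightarrow> 'a :: comm_monoid_add"
  assumes "p \<ge> 1"
  shows "(\<Sum>j<p+4. h j) = h 0 + h 1 + (\<Sum>j\<in>{2..p}. h j) + h (p+1) + h (p+2) + h (p+3)"
proof -
  have "{..<p+4} = ({0, 1} \<union> {2..p}) \<union> {p+1, p+2, p+3}" using assms by auto
  then have "(\<Sum>j<p+4. h j) = (\<Sum>j\<in>{0, 1} \<union> {2..p}. h j) + (\<Sum>j\<in>{p+1, p+2, p+3}. h j)"
    using assms by (simp only:) (rule sum.union_disjoint, auto)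
  also have "(\<Sum>j\<in>{0, 1} \<union> {2..p}. h j) = (\<Sum>j\<in>{0, 1}. h j) + (\<Sum>j\<in>{2..p}. h j)"
    by (rule sum.union_disjoint) auto
  finally show ?thesis by (simp add: add.assoc)
qed

lemma sum_if_neq:
  fixes f :: "'b \<Rightarrow> 'a :: ab_group_add"
  assumes "finite A" and "i \<in> A"
  shows "(\<Sum>j\<in>A. if i \<noteq> j then f j else 0) = sum f A - f i"
proof -
  have "(\<Sum>j\<in>A. if i \<noteq> j then f j else 0) = (\<Sum>j\<in>A. f j - (if i = j then f j else 0))"
    by (rule sum.cong) auto
  also have "\<dots> = sum f A - f i"
    using assms by (simp add: sum_subtractf)
  finally show ?thesis .
qed

lemma sum_2_to_p_const:
  fixes f :: "nat \<Rightarrow> real"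
  assumes "p \<ge> 1" and "\<And>i. 2 \<le> i \<Longrightarrow> i \<le> p \<Longrightarrow> f i = x"
  shows "(\<Sum>j\<in>{2..p}. f j) = (real p - 1) * x"
proof -
  have "(\<Sum>j\<in>{2..p}. f j) = (\<Sum>j\<in>{2..p}. x)" using assms(2) by (intro sum.cong) auto
  then show ?thesis using assms(1) by (simp add: of_nat_diff)
qed

abbreviation complement_U'_adj :: "nat \<Rightarrow> nat \<Rightarrow> nat \<Rightarrow> bool" where
  "complement_U'_adj p \<equiv> complement_graph (U'_adj p)"

abbreviation complement_U'_matrix :: "nat \<Rightarrow> real mat" where
  "complement_U'_matrix p \<equiv> adjacency_matrix (p + 4) (complement_U'_adj p)"

lemma complement_U'_adj_iff:
  "complement_U'_adj p i j \<longleftrightarrow> i \<noteq> j \<and> \<not> U'_edge p i j \<and> \<not> U'_edge p j i"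
  by (auto simp: complement_graph_def U'_adj_def)

context
  fixes p :: nat and v :: "real vec"
  assumes p: "p \<ge> 1" and v: "v \<in> carrier_vec (p + 4)"
begin

lemma complement_U'_row:
  assumes "i < p + 4"
  shows "(complement_U'_matrix p *\<^sub>v v) $ i =
    (if complement_U'_adj p i 0 then v $ 0 else 0) + (if complement_U'_adj p i 1 then v $ 1 else 0)
    + (\<Sum>j\<in>{2..p}. if complement_U'_adj p i j then v $ j else 0)
    + (if complement_U'_adj p i (p+1) then v $ (p+1) else 0)
    + (if complement_U'_adj p i (p+2) then v $ (p+2) else 0)
    + (if complement_U'_adj p i (p+3) then v $ (p+3) else 0)"
  by (simp only: adjacency_matrix_mult_vec_nth[OF v assms] sum_U'_vertices[OF p])

lemma complement_U'_row_0:
  "(complement_U'_matrix p *\<^sub>v v) $ 0 = v $ (p+1) + v $ (p+2) + v $ (p+3)"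
proof -
  have "(\<Sum>j\<in>{2..p}. if complement_U'_adj p 0 j then v $ j else 0) = 0"
    by (rule sum.neutral) (auto simp: complement_U'_adj_iff U'_edge_def)
  then show ?thesis using complement_U'_row[of 0] p by (simp add: complement_U'_adj_iff U'_edge_def)
qed

lemma complement_U'_row_1:
  "(complement_U'_matrix p *\<^sub>v v) $ 1 = (\<Sum>j\<in>{2..p}. v $ j) + v $ (p+2) + v $ (p+3)"
proof -
  have "(\<Sum>j\<in>{2..p}. if complement_U'_adj p 1 j then v $ j else 0) = (\<Sum>j\<in>{2..p}. v $ j)"
    by (rule sum.cong) (auto simp: complement_U'_adj_iff U'_edge_def)
  then show ?thesis using complement_U'_row[of 1] p by (simp add: complement_U'_adj_iff U'_edge_def)
qed

lemma complement_U'_row_pendant: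
  assumes i: "2 \<le> i" "i \<le> p"
  shows "(complement_U'_matrix p *\<^sub>v v) $ i =
    v $ 1 + ((\<Sum>j\<in>{2..p}. v $ j) - v $ i) + v $ (p+1) + v $ (p+2) + v $ (p+3)"
proof -
  have "(\<Sum>j\<in>{2..p}. if complement_U'_adj p i j then v $ j else 0)
      = (\<Sum>j\<in>{2..p}. if i \<noteq> j then v $ j else 0)"
    using i by (intro sum.cong) (auto simp: complement_U'_adj_iff U'_edge_def)
  also have "\<dots> = (\<Sum>j\<in>{2..p}. v $ j) - v $ i" using i by (intro sum_if_neq) auto
  finally show ?thesis using complement_U'_row[of i] i by (simp add: complement_U'_adj_iff U'_edge_def)
qed

lemma complement_U'_row_triangle_1:
  "(complement_U'_matrix p *\<^sub>v v) $ (p+1) = v $ 0 + (\<Sum>j\<in>{2..p}. v $ j)"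
proof -
  have "(\<Sum>j\<in>{2..p}. if complement_U'_adj p (p+1) j then v $ j else 0) = (\<Sum>j\<in>{2..p}. v $ j)"
    by (rule sum.cong) (auto simp: complement_U'_adj_iff U'_edge_def)
  then show ?thesis using complement_U'_row[of "p+1"] p by (simp add: complement_U'_adj_iff U'_edge_def)
qed

lemma complement_U'_row_triangle_23:
  assumes "i = p+2 \<or> i = p+3"
  shows "(complement_U'_matrix p *\<^sub>v v) $ i = v $ 0 + v $ 1 + (\<Sum>j\<in>{2..p}. v $ j)"
proof -
  have "(\<Sum>j\<in>{2..p}. if complement_U'_adj p i j then v $ j else 0) = (\<Sum>j\<in>{2..p}. v $ j)"
    using assms by (intro sum.cong) (auto simp: complement_U'_adj_iff U'_edge_def)
  then show ?thesis using complement_U'_row[of i] assms p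
    by (auto simp: complement_U'_adj_iff U'_edge_def)
qed

end

definition U'_cell_vec :: "nat \<Rightarrow> real \<Rightarrow> real \<Rightarrow> real \<Rightarrow> real \<Rightarrow> real \<Rightarrow> real vec" where
  "U'_cell_vec p x0 x1 x2 xa xb = vec (p + 4)
     (\<lambda>j. if j = 0 then x0 else if j = 1 then x1 else if j \<le> p then x2 else if j = p+1 then xa else xb)"

lemma U'_cell_vec_carrier: "U'_cell_vec p x0 x1 x2 xa xb \<in> carrier_vec (p + 4)"
  unfolding U'_cell_vec_def by simp

lemma U'_cell_vec_nth:
  assumes "p \<ge> 1"
  shows "U'_cell_vec p x0 x1 x2 xa xb $ 0 = x0" "U'_cell_vec p x0 x1 x2 xa xb $ 1 = x1"
    "\<And>i. 2 \<le> i \<Longrightarrow> i \<le> p \<Longrightarrow> U'_cell_vec p x0 x1 x2 xa xb $ i = x2"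
    "U'_cell_vec p x0 x1 x2 xa xb $ (p+1) = xa" "U'_cell_vec p x0 x1 x2 xa xb $ (p+2) = xb"
    "U'_cell_vec p x0 x1 x2 xa xb $ (p+3) = xb"
  using assms unfolding U'_cell_vec_def by auto

lemma less_U'_order_cases:
  fixes i p :: nat
  assumes "i < p + 4"
  obtains "i = 0" | "i = 1" | "2 \<le> i" "i \<le> p" | "i = p+1" | "i = p+2" | "i = p+3"
proof -
  have "i = 0 \<or> i = 1 \<or> (2 \<le> i \<and> i \<le> p) \<or> i = p+1 \<or> i = p+2 \<or> i = p+3"
    using assms by linarith
  then show ?thesis using that by blast
qed

lemma complement_U'_mult_cell_vec:
  assumes p: "p \<ge> 1" and Q: "quotient_eigen (real p) L x0 x1 x2 xa xb"
  defines "v \<equiv> U'_cell_vec p x0 x1 x2 xa xb"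
  shows "complement_U'_matrix p *\<^sub>v v = L \<cdot>\<^sub>v v"
proof (rule eq_vecI)
  have v: "v \<in> carrier_vec (p + 4)" unfolding v_def by (rule U'_cell_vec_carrier)
  then show "dim_vec (complement_U'_matrix p *\<^sub>v v) = dim_vec (L \<cdot>\<^sub>v v)"
    by (simp add: dim_row_adjacency_matrix)
  fix i assume "i < dim_vec (L \<cdot>\<^sub>v v)"
  then have i: "i < p + 4" using v by simp
  have vals: "v $ 0 = x0" "v $ 1 = x1" "\<And>i. 2 \<le> i \<Longrightarrow> i \<le> p \<Longrightarrow> v $ i = x2"
    "v $ (p+1) = xa" "v $ (p+2) = xb" "v $ (p+3) = xb"
    unfolding v_def using U'_cell_vec_nth[OF p] by simp_all
  have sum: "(\<Sum>j\<in>{2..p}. v $ j) = (real p - 1) * x2"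
    using sum_2_to_p_const[OF p] vals(3) by blast
  have "(complement_U'_matrix p *\<^sub>v v) $ i = L * v $ i"
    using i
  proof (cases rule: less_U'_order_cases)
    case 3
    then show ?thesis using complement_U'_row_pendant[OF p v 3] Q vals sum
      by (simp add: quotient_eigen_def algebra_simps)
  qed (use complement_U'_row_0[OF p v] complement_U'_row_1[OF p v]
      complement_U'_row_triangle_1[OF p v] complement_U'_row_triangle_23[OF p v] Q vals sum
      in \<open>auto simp: quotient_eigen_def\<close>)
  then show "(complement_U'_matrix p *\<^sub>v v) $ i = (L \<cdot>\<^sub>v v) $ i" using i v by simp
qed

lemma complement_U'_eigenvector_on_cells:
  assumes p: "p \<ge> 1" and v: "v \<in> carrier_vec (p + 4)"
    and eq: "complement_U'_matrix p *\<^sub>v v = k \<cdot>\<^sub>v v" and k: "k \<noteq> -1" "k \<noteq> 0"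
  obtains x2 where "v = U'_cell_vec p (v $ 0) (v $ 1) x2 (v $ (p+1)) (v $ (p+2))"
    and "quotient_eigen (real p) k (v $ 0) (v $ 1) x2 (v $ (p+1)) (v $ (p+2))"
proof -
  have row: "(complement_U'_matrix p *\<^sub>v v) $ i = k * v $ i" if "i < p + 4" for i
    using eq that v by simp
  define S where "S = (\<Sum>j\<in>{2..p}. v $ j)"
  define T where "T = v $ 1 + S + v $ (p+1) + v $ (p+2) + v $ (p+3)"
  define x2 where "x2 = T / (k + 1)"
  have k1: "k + 1 \<noteq> 0" using k by simp
  have v3: "v $ (p+3) = v $ (p+2)"
    using row[of "p+2"] row[of "p+3"] complement_U'_row_triangle_23[OF p v] k by simp
  have vi: "v $ i = x2" if "2 \<le> i" "i \<le> p" for i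
  proof -
    have "(k + 1) * v $ i = T"
      using row[of i] complement_U'_row_pendant[OF p v that] that
      unfolding T_def S_def by (simp add: algebra_simps)
    then show ?thesis unfolding x2_def using k1 by (simp add: field_simps)
  qed
  have S: "S = (real p - 1) * x2" unfolding S_def using p vi by (rule sum_2_to_p_const)
  have T: "(k + 1) * x2 = T" unfolding x2_def using k1 by simp
  have "v = U'_cell_vec p (v $ 0) (v $ 1) x2 (v $ (p+1)) (v $ (p+2))"
  proof (rule eq_vecI)
    fix i assume "i < dim_vec (U'_cell_vec p (v $ 0) (v $ 1) x2 (v $ (p+1)) (v $ (p+2)))"
    then have "i < p + 4" by (simp add: U'_cell_vec_def)
    then show "v $ i = U'_cell_vec p (v $ 0) (v $ 1) x2 (v $ (p+1)) (v $ (p+2)) $ i"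
      by (cases rule: less_U'_order_cases) (use p vi v3 U'_cell_vec_nth in auto)
  qed (use v in \<open>simp add: U'_cell_vec_def\<close>)
  moreover have "quotient_eigen (real p) k (v $ 0) (v $ 1) x2 (v $ (p+1)) (v $ (p+2))"
    using row[of 0] row[of 1] row[of "p+1"] row[of "p+2"] T S v3
      complement_U'_row_0[OF p v] complement_U'_row_1[OF p v]
      complement_U'_row_triangle_1[OF p v] complement_U'_row_triangle_23[OF p v]
    unfolding quotient_eigen_def T_def S_def[symmetric] by (simp add: algebra_simps)
  ultimately show ?thesis by (rule that)
qed

lemma eigenvalue_complement_U'_cases:
  assumes p: "p \<ge> 1" and ev: "eigenvalue (complement_U'_matrix p) k"
  shows "k = -1 \<or> k = 0 \<or> poly (g_poly p) k = 0"
proof (rule ccontr)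
  assume "\<not> ?thesis"
  then have k: "k \<noteq> -1" "k \<noteq> 0" and g: "g_fun (real p) k \<noteq> 0"
    by (auto simp: poly_g_poly)
  from ev obtain v where v: "v \<in> carrier_vec (p + 4)" and v0: "v \<noteq> 0\<^sub>v (p + 4)"
    and eq: "complement_U'_matrix p *\<^sub>v v = k \<cdot>\<^sub>v v"
    unfolding eigenvalue_def eigenvector_def dim_row_adjacency_matrix by blast
  obtain x2 where v_cells: "v = U'_cell_vec p (v $ 0) (v $ 1) x2 (v $ (p+1)) (v $ (p+2))"
    and Q: "quotient_eigen (real p) k (v $ 0) (v $ 1) x2 (v $ (p+1)) (v $ (p+2))"
    using complement_U'_eigenvector_on_cells[OF p v eq k] .
  have "v = U'_cell_vec p 0 0 0 0 0"
    using v_cells quotient_eigen_trivial_if_g_nonzero[OF Q g] by simp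
  also have "\<dots> = 0\<^sub>v (p + 4)" unfolding U'_cell_vec_def by auto
  finally show False using v0 by contradiction
qed

lemma eigenvalue_complement_U'_of_root:
  assumes p: "p \<ge> 1" and g: "poly (g_poly p) m = 0" and m: "m < -2"
  shows "eigenvalue (complement_U'_matrix p) m"
proof -
  obtain x0 x1 x2 xa xb where Q: "quotient_eigen (real p) m x0 x1 x2 xa xb"
    and nz: "x1 \<noteq> 0 \<or> xa \<noteq> 0"
    using quotient_eigen_nontrivial_solution[of "real p" m] g m by (auto simp: poly_g_poly)
  have "U'_cell_vec p x0 x1 x2 xa xb \<noteq> 0\<^sub>v (p + 4)"
    using nz U'_cell_vec_nth(2,4)[OF p, of x0 x1 x2 xa xb] by auto
  then show ?thesis
    using complement_U'_mult_cell_vec[OF p Q] U'_cell_vec_carrier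
    unfolding eigenvalue_def eigenvector_def dim_row_adjacency_matrix by blast
qed

theorem mainTheorem8:
  fixes p :: nat
  assumes "p \<ge> 1"
  shows "lambda_min (adjacency_matrix (p + 4) (complement_graph (U'_adj p)))
           = Min {x :: real. poly (g_poly p) x = 0}"
proof -
  define R where "R = {x :: real. poly (g_poly p) x = 0}"
  define E where "E = {k. eigenvalue (complement_U'_matrix p) k}"
  have finR: "finite R" unfolding R_def by (rule poly_roots_finite[OF g_poly_nonzero])
  obtain r where r: "r < -2" "r \<in> R" using g_poly_root_below_minus_2[OF assms] R_def by auto
  have Min_R: "Min R \<in> R" "Min R < -2"
    using Min_in[OF finR] Min_le[OF finR r(2)] r by auto
  have "E \<subseteq> R \<union> {-1, 0}"
    unfolding E_def R_def using eigenvalue_complement_U'_cases[OF assms] by auto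
  then have "finite E" using finR by (simp add: finite_subset)
  moreover have "Min R \<in> E"
    unfolding E_def using eigenvalue_complement_U'_of_root[OF assms] Min_R R_def by simp
  moreover have "Min R \<le> k" if "k \<in> E" for k
    using that \<open>E \<subseteq> R \<union> {-1, 0}\<close> Min_le[OF finR] Min_R(2) by fastforce
  ultimately have "Min E = Min R" by (intro Min_eqI)
  then show ?thesis unfolding lambda_min_def E_def R_def by simp
qed

end
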